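(* Let $\gamma>1$. There exist an integer $n_0(\gamma)$ and a constant $a(\gamma)>0$ such that for every $n\ge n_0(\gamma)$ the unique negative root $\lambda_n$ of $$g_n(\lambda)=\frac{1}{\lambda}+\frac{\frac{d}{d\lambda}h^{(1)}_n(-i\lambda)}{h^{(1)}_n(-i\lambda)}-\gamma=0$$ satisfies $$\Bigl|\lambda_n+\sqrt{\tfrac{n(n+1)}{\gamma^2-1}}\Bigr|\le a(\gamma).$$
   Context: $h^{(1)}_n$ is the spherical Hankel function of the first kind; for $\lambda<0$, $h^{(1)}_n(-i\lambda)=(-i)^n\frac{e^{\lambda}}{\lambda}R_n(-\frac{1}{2\lambda})$ (up to an $n$-independent constant) with $R_n(w)=\sum_{m=0}^n\frac{(n+m)!}{m!(n-m)!}w^m$; $\frac{d}{d\lambda}h^{(1)}_n(-i\lambda)$ is the derivative of $\lambda\mapsto h^{(1)}_n(-i\lambda)$. For $\gamma>1$ and $n\ge1$, $g_n$ has exactly one root in $(-\infty,0)$. *)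

theory Defs
  imports "HOL-Analysis.Analysis"
begin

definition Rpoly :: "nat \<Rightarrow> real \<Rightarrow> real" where
  "Rpoly n w = (\<Sum>m\<le>n. (fact (n + m) / (fact m * fact (n - m))) * w ^ m)"

text \<open>The map lambda |-> h^(1)_n(-i lambda) for lambda < 0, given by the closed form
  h^(1)_n(-i lambda) = (-i)^n e^lambda / lambda R_n(-1/(2 lambda)).\<close>
definition hankel_neg :: "nat \<Rightarrow> real \<Rightarrow> complex" where
  "hankel_neg n lam = (- \<i>) ^ n * complex_of_real (exp lam / lam * Rpoly n (- 1 / (2 * lam)))"

definition g_fun :: "real \<Rightarrow> nat \<Rightarrow> real \<Rightarrow> complex" where
  "g_fun \<gamma> n lam = complex_of_real (1 / lam)
      + vector_derivative (hankel_neg n) (at lam) / hankel_neg n lam - complex_of_real \<gamma>"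

end

theory Submission
  imports Defs
begin

text \<open>With \<open>w = -1/(2\<lambda>)\<close> the equation \<open>g\<^sub>n(\<lambda>) = 0\<close> becomes \<open>s(w) = \<gamma> - 1\<close> for
  \<open>s = 2w\<^sup>2 R\<^sub>n'/R\<^sub>n\<close>. Bessel's equation for \<open>R\<^sub>n\<close> turns into the Riccati equation
  \<open>2w\<^sup>2 s' = 4n(n+1)w\<^sup>2 - s\<^sup>2 - 2s\<close> with \<open>s(0) = 0\<close>, and barrier arguments trap \<open>s\<close>
  strictly between \<open>\<surd>(1 + 4n(n+1)w\<^sup>2) - 1 - w\<close> and \<open>\<surd>(1 + 4n(n+1)w\<^sup>2) - 1\<close>. At the root
  this gives \<open>(\<gamma>\<^sup>2 - 1)\<lambda>\<^sup>2 < n(n+1) \<le> (\<gamma>\<^sup>2 - 1)\<lambda>\<^sup>2 - \<gamma>\<lambda> + 1/4\<close>, which determines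
  \<open>-\<lambda>\<close> up to an error depending only on \<open>\<gamma>\<close>.\<close>

definition Rpoly_coeff :: "nat \<Rightarrow> nat \<Rightarrow> real" where
  "Rpoly_coeff n m = fact (n + m) / (fact m * fact (n - m))"

definition Rpoly_deriv :: "nat \<Rightarrow> real \<Rightarrow> real" where
  "Rpoly_deriv n w = (\<Sum>m\<le>n. Rpoly_coeff n m * (real m * w ^ (m - 1)))"

definition Rpoly_deriv2 :: "nat \<Rightarrow> real \<Rightarrow> real" where
  "Rpoly_deriv2 n w = (\<Sum>m\<le>n. Rpoly_coeff n m * (real m * (real (m - 1) * w ^ (m - 2))))"

lemma Rpoly_eq_sum_coeff: "Rpoly n w = (\<Sum>m\<le>n. Rpoly_coeff n m * w ^ m)"
  by (simp add: Rpoly_def Rpoly_coeff_def)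

lemma Rpoly_coeff_nonneg: "Rpoly_coeff n m \<ge> 0"
  by (simp add: Rpoly_coeff_def)

lemma Rpoly_coeff_Suc:
  assumes "m < n"
  shows "real (Suc m) * Rpoly_coeff n (Suc m) = real (n - m) * real (n + m + 1) * Rpoly_coeff n m"
proof -
  obtain k where n: "n = Suc (m + k)"
    using assms less_iff_Suc_add by auto
  have "n - Suc m = k" "n - m = Suc k"
    using n by auto
  moreover have "fact (n + Suc m) = real (n + m + 1) * (fact (n + m) :: real)"
    by simp
  ultimately show ?thesis
    by (simp add: Rpoly_coeff_def field_simps del: of_nat_Suc)
qed

lemma has_real_derivative_Rpoly: "(Rpoly n has_real_derivative Rpoly_deriv n w) (at w)"
proof -
  have "((\<lambda>w. \<Sum>m\<le>n. Rpoly_coeff n m * w ^ m) has_real_derivative Rpoly_deriv n w) (at w)"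
    unfolding Rpoly_deriv_def by (intro derivative_eq_intros) auto
  then show ?thesis
    by (simp add: Rpoly_eq_sum_coeff[abs_def])
qed

lemma has_real_derivative_Rpoly_deriv:
  "(Rpoly_deriv n has_real_derivative Rpoly_deriv2 n w) (at w)"
proof -
  have "((\<lambda>w. \<Sum>m\<le>n. Rpoly_coeff n m * (real m * w ^ (m - 1)))
          has_real_derivative Rpoly_deriv2 n w) (at w)"
    unfolding Rpoly_deriv2_def by (intro derivative_eq_intros) (auto simp: numeral_2_eq_2)
  then show ?thesis
    by (simp add: Rpoly_deriv_def[abs_def])
qed

lemma Rpoly_deriv_eq:
  "Rpoly_deriv n w = (\<Sum>m<n. real (n - m) * real (n + m + 1) * Rpoly_coeff n m * w ^ m)"
proof (cases n)
  case 0
  then show ?thesis by (simp add: Rpoly_deriv_def)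
next
  case (Suc k)
  have "Rpoly_deriv n w = (\<Sum>m\<le>k. real (Suc m) * Rpoly_coeff n (Suc m) * w ^ m)"
    unfolding Rpoly_deriv_def Suc sum.atMost_Suc_shift by (simp add: mult_ac)
  also have "\<dots> = (\<Sum>m<n. real (n - m) * real (n + m + 1) * Rpoly_coeff n m * w ^ m)"
    using Rpoly_coeff_Suc[of _ n] by (intro sum.cong) (auto simp: Suc lessThan_Suc_atMost)
  finally show ?thesis .
qed

text \<open>\<open>R\<^sub>n(w) = y\<^sub>n(2w)\<close> for the Bessel polynomial \<open>y\<^sub>n\<close>, so this is Bessel's equation
  \<open>x\<^sup>2y'' + (2x + 2)y' = n(n+1)y\<close> in the variable \<open>w\<close>.\<close>
lemma Rpoly_ode:
  "w\<^sup>2 * Rpoly_deriv2 n w + (2 * w + 1) * Rpoly_deriv n w = real n * (real n + 1) * Rpoly n w"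
proof -
  have euler: "w\<^sup>2 * Rpoly_deriv2 n w + 2 * w * Rpoly_deriv n w
      = (\<Sum>m\<le>n. real m * (real m + 1) * Rpoly_coeff n m * w ^ m)"
    unfolding Rpoly_deriv2_def Rpoly_deriv_def sum_distrib_left sum.distrib[symmetric]
  proof (intro sum.cong refl)
    fix m
    show "w\<^sup>2 * (Rpoly_coeff n m * (real m * (real (m - 1) * w ^ (m - 2))))
        + 2 * w * (Rpoly_coeff n m * (real m * w ^ (m - 1)))
        = real m * (real m + 1) * Rpoly_coeff n m * w ^ m"
      by (cases m; cases "m - 1") (auto simp: power2_eq_square algebra_simps)
  qed
  have "(\<Sum>m\<le>n. real m * (real m + 1) * Rpoly_coeff n m * w ^ m) + Rpoly_deriv n w
      = (\<Sum>m\<le>n. real n * (real n + 1) * Rpoly_coeff n m * w ^ m)"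
    unfolding Rpoly_deriv_eq lessThan_Suc_atMost[symmetric] sum.lessThan_Suc
    by (simp add: sum.distrib[symmetric] of_nat_diff algebra_simps)
  then show ?thesis
    using euler by (simp add: Rpoly_eq_sum_coeff sum_distrib_left algebra_simps)
qed

lemma Rpoly_ge_1: "w \<ge> 0 \<Longrightarrow> Rpoly n w \<ge> 1"
proof -
  assume "w \<ge> 0"
  have "Rpoly n w = 1 + (\<Sum>m\<in>{1..n}. Rpoly_coeff n m * w ^ m)"
    unfolding Rpoly_eq_sum_coeff atMost_atLeast0
    by (simp add: sum.atLeast_Suc_atMost Rpoly_coeff_def)
  also have "\<dots> \<ge> 1"
    using \<open>w \<ge> 0\<close> Rpoly_coeff_nonneg by (simp add: sum_nonneg)
  finally show ?thesis .
qed

lemma Rpoly_deriv_nonneg: "w \<ge> 0 \<Longrightarrow> Rpoly_deriv n w \<ge> 0"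
  unfolding Rpoly_deriv_def using Rpoly_coeff_nonneg by (simp add: sum_nonneg)

text \<open>At \<open>w = -1/(2\<lambda>)\<close> this is \<open>(d/d\<lambda>) log R\<^sub>n(w)\<close>, so that
  \<open>g\<^sub>n(\<lambda>) = riccati_sol n w + 1 - \<gamma>\<close>.\<close>
definition riccati_sol :: "nat \<Rightarrow> real \<Rightarrow> real" where
  "riccati_sol n w = 2 * w\<^sup>2 * Rpoly_deriv n w / Rpoly n w"

lemma riccati_sol_0 [simp]: "riccati_sol n 0 = 0"
  by (simp add: riccati_sol_def)

lemma riccati_sol_nonneg: "w \<ge> 0 \<Longrightarrow> riccati_sol n w \<ge> 0"
  unfolding riccati_sol_def using Rpoly_ge_1[of w n] Rpoly_deriv_nonneg[of w n] by simp

lemma continuous_on_riccati_sol: "continuous_on {0..} (riccati_sol n)"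
proof -
  have "continuous_on {0..} (Rpoly n)" "continuous_on {0..} (Rpoly_deriv n)"
    using has_real_derivative_Rpoly has_real_derivative_Rpoly_deriv
    by (meson DERIV_isCont continuous_at_imp_continuous_on)+
  then show ?thesis
    unfolding riccati_sol_def[abs_def] using Rpoly_ge_1[of _ n]
    by (intro continuous_intros) force+
qed

definition riccati_rhs :: "real \<Rightarrow> real \<Rightarrow> real \<Rightarrow> real" where
  "riccati_rhs N w s = (4 * N * w\<^sup>2 - s\<^sup>2 - 2 * s) / (2 * w\<^sup>2)"

lemma has_real_derivative_riccati_sol:
  assumes "w > 0"
  shows "(riccati_sol n has_real_derivative
           riccati_rhs (real n * (real n + 1)) w (riccati_sol n w)) (at w)"
proof -
  define R R' R'' N where "R = Rpoly n w" and "R' = Rpoly_deriv n w"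
    and "R'' = Rpoly_deriv2 n w" and "N = real n * (real n + 1)"
  have "R \<ge> 1"
    using Rpoly_ge_1[of w n] assms by (simp add: R_def)
  have "(riccati_sol n has_real_derivative ((4 * w * R' + 2 * w\<^sup>2 * R'') * R - 2 * w\<^sup>2 * R' * R') / R\<^sup>2) (at w)"
    unfolding riccati_sol_def[abs_def] R_def R'_def R''_def using \<open>R \<ge> 1\<close>
    by (auto intro!: derivative_eq_intros has_real_derivative_Rpoly has_real_derivative_Rpoly_deriv
        simp: R_def power2_eq_square algebra_simps)
  moreover have "(4 * w * R' + 2 * w\<^sup>2 * R'') * R - 2 * w\<^sup>2 * R' * R'
      = 2 * N * R\<^sup>2 - 2 * R' * R - 2 * w\<^sup>2 * R'\<^sup>2"
  proof -
    have "(4 * w * R' + 2 * w\<^sup>2 * R'') * R - 2 * w\<^sup>2 * R' * R'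
        = 2 * R * (w\<^sup>2 * R'' + (2 * w + 1) * R') - 2 * R' * R - 2 * w\<^sup>2 * R'\<^sup>2"
      by (simp add: power2_eq_square algebra_simps)
    also have "w\<^sup>2 * R'' + (2 * w + 1) * R' = N * R"
      unfolding R_def R'_def R''_def N_def by (rule Rpoly_ode)
    finally show ?thesis
      by (simp add: power2_eq_square)
  qed
  moreover have "(2 * N * R\<^sup>2 - 2 * R' * R - 2 * w\<^sup>2 * R'\<^sup>2) / R\<^sup>2
      = (4 * N * w\<^sup>2 - (2 * w\<^sup>2 * R' / R)\<^sup>2 - 2 * (2 * w\<^sup>2 * R' / R)) / (2 * w\<^sup>2)"
    using \<open>R \<ge> 1\<close> assms by (simp add: field_simps power2_eq_square)
  ultimately show ?thesis
    by (simp add: riccati_rhs_def riccati_sol_def R_def R'_def N_def)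
qed

text \<open>At a minimum of \<open>f\<close> on \<open>[a, b]\<close> where \<open>f \<le> 0\<close>, a positive derivative would
  produce smaller values just to the left.\<close>
lemma pos_if_deriv_pos_where_nonpos:
  fixes f :: "real \<Rightarrow> real"
  assumes "a < b" and "continuous_on {a..b} f" and "f a \<ge> 0"
    and deriv: "\<And>x. x \<in> {a<..b} \<Longrightarrow> f x \<le> 0 \<Longrightarrow> \<exists>d>0. (f has_real_derivative d) (at x)"
  shows "f b > 0"
proof (rule ccontr)
  assume "\<not> f b > 0"
  obtain m0 where m0: "m0 \<in> {a..b}" "\<And>y. y \<in> {a..b} \<Longrightarrow> f m0 \<le> f y"
    using continuous_attains_inf[OF compact_Icc _ \<open>continuous_on {a..b} f\<close>] \<open>a < b\<close> by fastforce
  \<comment> \<open>if the minimum sits at \<open>a\<close>, then \<open>f b \<le> 0 \<le> f a\<close> makes \<open>b\<close> a minimum as well\<close>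
  define m where "m = (if m0 = a then b else m0)"
  have min: "\<And>y. y \<in> {a..b} \<Longrightarrow> f m \<le> f y"
    using m0 \<open>\<not> f b > 0\<close> \<open>f a \<ge> 0\<close> \<open>a < b\<close> by (force simp: m_def)
  have "m \<in> {a<..b}" "f m \<le> 0"
    using m0 min[of b] \<open>\<not> f b > 0\<close> \<open>a < b\<close> by (auto simp: m_def)
  then obtain d where "d > 0" "(f has_real_derivative d) (at m)"
    using deriv by blast
  then obtain e where "e > 0" and left: "\<And>h. 0 < h \<Longrightarrow> h < e \<Longrightarrow> f (m - h) < f m"
    using DERIV_pos_inc_left by blast
  define h where "h = min (e / 2) ((m - a) / 2)"
  have "0 < h" "h < e" "m - h \<in> {a..b}"
    using \<open>e > 0\<close> \<open>m \<in> {a<..b}\<close> by (auto simp: h_def min_def field_simps)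
  then show False
    using left min by force
qed

lemma riccati_sol_less:
  assumes "w > 0" and "n \<ge> 1"
  shows "riccati_sol n w < sqrt (1 + 4 * (real n * (real n + 1)) * w\<^sup>2) - 1"
proof -
  define N where "N = real n * (real n + 1)"
  have "N > 0"
    using \<open>n \<ge> 1\<close> by (simp add: N_def)
  define T where "T x = 4 * N * x\<^sup>2 - (riccati_sol n x)\<^sup>2 - 2 * riccati_sol n x" for x
  have "T w > 0"
  proof (rule pos_if_deriv_pos_where_nonpos[where a = 0 and b = w and f = T])
    show "continuous_on {0..w} T"
      unfolding T_def by (intro continuous_intros continuous_on_subset[OF continuous_on_riccati_sol]) auto
    fix x
    assume x: "x \<in> {0<..w}" and "T x \<le> 0"
    define s where "s = riccati_sol n x"
    have "(T has_real_derivative 8 * N * x - (2 * s + 2) * riccati_rhs N x s) (at x)"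
      unfolding T_def[abs_def] s_def N_def using x
      by (auto intro!: derivative_eq_intros has_real_derivative_riccati_sol simp: algebra_simps)
    moreover have "riccati_rhs N x s \<le> 0"
      using \<open>T x \<le> 0\<close> unfolding riccati_rhs_def T_def s_def
      by (intro divide_nonpos_nonneg) auto
    then have "(2 * s + 2) * riccati_rhs N x s \<le> 0"
      using riccati_sol_nonneg[of x n] x by (simp add: s_def mult_nonneg_nonpos)
    then have "8 * N * x - (2 * s + 2) * riccati_rhs N x s > 0"
      using x \<open>N > 0\<close> by (smt (verit) mult_pos_pos greaterThanAtMost_iff)
    ultimately show "\<exists>d>0. (T has_real_derivative d) (at x)"
      by blast
  qed (use \<open>w > 0\<close> in \<open>simp_all add: T_def\<close>)
  then have "(riccati_sol n w + 1)\<^sup>2 < 1 + 4 * N * w\<^sup>2"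
    by (simp add: T_def power2_eq_square algebra_simps)
  then show ?thesis
    using riccati_sol_nonneg[of w n] \<open>w > 0\<close> real_less_rsqrt by (force simp: N_def)
qed

text \<open>\<open>4Nx/E - 1\<close> is the slope of the lower barrier \<open>E - 1 - x\<close>.\<close>
lemma riccati_rhs_gt:
  fixes N x s :: real
  defines "E \<equiv> sqrt (1 + 4 * N * x\<^sup>2)"
  assumes "x > 0" and "N \<ge> 0" and "0 \<le> s" and "s \<le> E - 1 - x"
  shows "riccati_rhs N x s > 4 * N * x / E - 1"
proof -
  have E2: "E\<^sup>2 = 1 + 4 * N * x\<^sup>2" and "E > 0"
    using \<open>N \<ge> 0\<close> by (simp_all add: E_def add_pos_nonneg)
  have "s\<^sup>2 + 2 * s \<le> (E - 1 - x)\<^sup>2 + 2 * (E - 1 - x)"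
    using assms(4,5) by (intro add_mono power_mono) auto
  also have "\<dots> = 4 * N * x\<^sup>2 - 2 * E * x + x\<^sup>2"
    using E2 by (simp add: power2_eq_square algebra_simps)
  finally have "riccati_rhs N x s \<ge> (2 * E * x - x\<^sup>2) / (2 * x\<^sup>2)"
    unfolding riccati_rhs_def using \<open>x > 0\<close> by (intro divide_right_mono) auto
  also have "(2 * E * x - x\<^sup>2) / (2 * x\<^sup>2) = 4 * N * x / E - 1 + (1 / (x * E) + 1 / 2)"
    using \<open>x > 0\<close> \<open>E > 0\<close> E2 by (simp add: field_simps power2_eq_square)
  finally show ?thesis
    using \<open>x > 0\<close> \<open>E > 0\<close> by (smt (verit) divide_pos_pos mult_pos_pos)
qed

lemma riccati_sol_greater:
  assumes "w > 0" and "n \<ge> 1"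
  shows "riccati_sol n w > sqrt (1 + 4 * (real n * (real n + 1)) * w\<^sup>2) - 1 - w"
proof -
  define N where "N = real n * (real n + 1)"
  have "N \<ge> 0"
    by (simp add: N_def)
  define E where "E x = sqrt (1 + 4 * N * x\<^sup>2)" for x
  define D where "D x = riccati_sol n x - (E x - 1 - x)" for x
  have "D w > 0"
  proof (rule pos_if_deriv_pos_where_nonpos[where a = 0 and b = w and f = D])
    show "continuous_on {0..w} D"
      unfolding D_def E_def
      by (intro continuous_intros continuous_on_subset[OF continuous_on_riccati_sol]) auto
    fix x
    assume x: "x \<in> {0<..w}" and "D x \<le> 0"
    have "1 + 4 * N * x\<^sup>2 > 0"
      using \<open>N \<ge> 0\<close> by (simp add: add_pos_nonneg)
    then have "(D has_real_derivative
        riccati_rhs N x (riccati_sol n x) - (4 * N * x / E x - 1)) (at x)"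
      unfolding D_def[abs_def] E_def N_def using x
      by (auto intro!: derivative_eq_intros has_real_derivative_riccati_sol simp: field_simps)
    moreover have "riccati_rhs N x (riccati_sol n x) - (4 * N * x / E x - 1) > 0"
      using riccati_rhs_gt[of x N "riccati_sol n x"] riccati_sol_nonneg[of x n] x \<open>N \<ge> 0\<close> \<open>D x \<le> 0\<close>
      by (simp add: D_def E_def)
    ultimately show "\<exists>d>0. (D has_real_derivative d) (at x)"
      by blast
  qed (use \<open>w > 0\<close> in \<open>simp_all add: D_def E_def\<close>)
  then show ?thesis
    by (simp add: D_def E_def N_def)
qed

lemma riccati_sol_at_root:
  assumes "lam < 0" and "g_fun \<gamma> n lam = 0"
  shows "riccati_sol n (-1 / (2 * lam)) = \<gamma> - 1"
proof -
  define w where "w = -1 / (2 * lam)"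
  define F where "F l = exp l / l * Rpoly n (-1 / (2 * l))" for l
  define F' where "F' = (exp lam * lam - exp lam) / lam\<^sup>2 * Rpoly n w
                         + exp lam / lam * (Rpoly_deriv n w * (1 / (2 * lam\<^sup>2)))"
  have "w > 0" "Rpoly n w \<ge> 1"
    using \<open>lam < 0\<close> Rpoly_ge_1[of w n] by (simp_all add: w_def divide_pos_neg)
  have "(F has_real_derivative F') (at lam)"
    unfolding F_def[abs_def] F'_def w_def using \<open>lam < 0\<close>
    by (auto intro!: derivative_eq_intros DERIV_chain2[OF has_real_derivative_Rpoly]
        simp: field_simps power2_eq_square)
  moreover have hankel: "hankel_neg n = (\<lambda>l. (- \<i>) ^ n * complex_of_real (F l))"
    by (simp add: hankel_neg_def F_def fun_eq_iff)
  ultimately have "vector_derivative (hankel_neg n) (at lam) = (- \<i>) ^ n * complex_of_real F'"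
    unfolding hankel
    by (intro vector_derivative_at has_vector_derivative_mult_right has_vector_derivative_of_real)
  then have "g_fun \<gamma> n lam = complex_of_real (1 / lam + F' / F lam - \<gamma>)"
    by (simp add: g_fun_def hankel)
  then have "1 / lam + F' / F lam = \<gamma>"
    using \<open>g_fun \<gamma> n lam = 0\<close> by (simp del: of_real_diff)
  moreover have "1 / lam + F' / F lam = 1 + riccati_sol n w"
    unfolding F'_def F_def riccati_sol_def w_def[symmetric] using \<open>lam < 0\<close> \<open>Rpoly n w \<ge> 1\<close>
    by (simp add: w_def field_simps power2_eq_square)
  ultimately show ?thesis
    by (simp add: w_def)
qed

lemma g_fun_root_bounds:
  assumes "lam < 0" and "n \<ge> 1" and "g_fun \<gamma> n lam = 0"
  defines "N \<equiv> real n * (real n + 1)"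
  shows "(\<gamma>\<^sup>2 - 1) * lam\<^sup>2 < N" and "N \<le> (\<gamma>\<^sup>2 - 1) * lam\<^sup>2 - \<gamma> * lam + 1 / 4"
proof -
  define w where "w = -1 / (2 * lam)"
  have "w > 0"
    using \<open>lam < 0\<close> by (simp add: w_def divide_pos_neg)
  have s: "riccati_sol n w = \<gamma> - 1"
    using riccati_sol_at_root[OF \<open>lam < 0\<close> \<open>g_fun \<gamma> n lam = 0\<close>] by (simp add: w_def)
  have "\<gamma> \<ge> 1"
    using riccati_sol_nonneg[of w n] \<open>w > 0\<close> s by simp
  have "lam\<^sup>2 > 0"
    using \<open>lam < 0\<close> by simp
  have "\<gamma> < sqrt (1 + 4 * N * w\<^sup>2)"
    using riccati_sol_less[OF \<open>w > 0\<close> \<open>n \<ge> 1\<close>] s by (simp add: N_def)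
  then have "\<gamma>\<^sup>2 < 1 + 4 * N * w\<^sup>2"
    using \<open>\<gamma> \<ge> 1\<close> by (meson not_le real_le_lsqrt zero_le_one order_trans)
  also have "1 + 4 * N * w\<^sup>2 = (lam\<^sup>2 + N) / lam\<^sup>2"
    using \<open>lam < 0\<close> by (simp add: w_def field_simps power2_eq_square)
  finally show "(\<gamma>\<^sup>2 - 1) * lam\<^sup>2 < N"
    using \<open>lam\<^sup>2 > 0\<close> by (simp add: pos_less_divide_eq algebra_simps)
  have "sqrt (1 + 4 * N * w\<^sup>2) < \<gamma> + w"
    using riccati_sol_greater[OF \<open>w > 0\<close> \<open>n \<ge> 1\<close>] s by (simp add: N_def)
  then have "1 + 4 * N * w\<^sup>2 < (\<gamma> + w)\<^sup>2"
    by (meson not_le real_le_rsqrt)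
  also have "(\<gamma> + w)\<^sup>2 = (\<gamma>\<^sup>2 * lam\<^sup>2 - \<gamma> * lam + 1 / 4) / lam\<^sup>2"
    using \<open>lam < 0\<close> by (simp add: w_def field_simps power2_eq_square)
  finally have "lam\<^sup>2 + N < \<gamma>\<^sup>2 * lam\<^sup>2 - \<gamma> * lam + 1 / 4"
    using \<open>1 + 4 * N * w\<^sup>2 = (lam\<^sup>2 + N) / lam\<^sup>2\<close> \<open>lam\<^sup>2 > 0\<close> by (simp add: divide_less_cancel)
  then show "N \<le> (\<gamma>\<^sup>2 - 1) * lam\<^sup>2 - \<gamma> * lam + 1 / 4"
    by (simp add: algebra_simps)
qed

lemma sqrt_quotient_approx:
  fixes c N x \<gamma> :: real
  assumes "c > 0" and "N \<ge> 1" and "x > 0" and "\<gamma> \<ge> 0"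
    and "c * x\<^sup>2 < N" and "N \<le> c * x\<^sup>2 + \<gamma> * x + 1 / 4"
  shows "\<bar>sqrt (N / c) - x\<bar> \<le> (\<gamma> + sqrt c / 4) / c"
proof -
  define X where "X = sqrt (N / c)"
  have X2: "X\<^sup>2 = N / c"
    using assms(1,2) by (simp add: X_def)
  have "X \<ge> 1 / sqrt c"
    using assms(1,2) by (simp add: X_def real_sqrt_divide divide_right_mono)
  have "x < X"
    using assms(1,3,5) by (simp add: X_def real_less_rsqrt field_simps)
  have "c * ((X - x) * (X + x)) \<le> \<gamma> * x + 1 / 4"
    using assms(1,6) X2 by (simp add: power2_eq_square field_simps)
  then have "X - x \<le> (\<gamma> * x + 1 / 4) / (c * (X + x))"
    using assms(1,3) \<open>x < X\<close> by (subst pos_le_divide_eq) (simp_all add: mult_ac)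
  also have "\<dots> = (\<gamma> * (x / (X + x)) + 1 / (4 * (X + x))) / c"
    by (simp add: add_divide_distrib algebra_simps)
  also have "\<dots> \<le> (\<gamma> + sqrt c / 4) / c"
  proof -
    have "\<gamma> * (x / (X + x)) \<le> \<gamma>"
      using assms(3,4) \<open>x < X\<close> by (intro mult_left_le) simp_all
    moreover have "1 \<le> sqrt c * (X + x)"
      using assms(1,3) \<open>X \<ge> 1 / sqrt c\<close> by (simp add: field_simps add_increasing2)
    then have "1 / (4 * (X + x)) \<le> sqrt c / 4"
      using assms(3) \<open>x < X\<close> by (simp add: field_simps)
    ultimately show ?thesis
      using assms(1) by (simp add: divide_right_mono)
  qed
  finally show ?thesis
    using \<open>x < X\<close> by (simp add: X_def)
qed

theorem lemma4p1:
  fixes \<gamma> :: real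
  assumes "\<gamma> > 1"
  shows "\<exists>n0::nat. \<exists>a::real. a > 0 \<and>
           (\<forall>n\<ge>n0. \<forall>lam::real. lam < 0 \<longrightarrow> g_fun \<gamma> n lam = 0 \<longrightarrow>
              \<bar>lam + sqrt (real n * (real n + 1) / (\<gamma>\<^sup>2 - 1))\<bar> \<le> a)"
proof (intro exI conjI allI impI)
  have "\<gamma>\<^sup>2 - 1 > 0"
    using assms by (simp add: one_less_power)
  then show "(\<gamma> + sqrt (\<gamma>\<^sup>2 - 1) / 4) / (\<gamma>\<^sup>2 - 1) > 0"
    using assms by (intro divide_pos_pos add_pos_nonneg) auto
  fix n :: nat and lam :: real
  assume "n \<ge> 1" and "lam < 0" and "g_fun \<gamma> n lam = 0"
  then have "real n * (real n + 1) \<ge> 1"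
    by (simp add: mult_ge1_I)
  have "\<bar>sqrt (real n * (real n + 1) / (\<gamma>\<^sup>2 - 1)) - (- lam)\<bar>
      \<le> (\<gamma> + sqrt (\<gamma>\<^sup>2 - 1) / 4) / (\<gamma>\<^sup>2 - 1)"
    using g_fun_root_bounds[OF \<open>lam < 0\<close> \<open>n \<ge> 1\<close> \<open>g_fun \<gamma> n lam = 0\<close>]
      \<open>\<gamma>\<^sup>2 - 1 > 0\<close> \<open>real n * (real n + 1) \<ge> 1\<close> \<open>lam < 0\<close> assms
    by (intro sqrt_quotient_approx) simp_all
  then show "\<bar>lam + sqrt (real n * (real n + 1) / (\<gamma>\<^sup>2 - 1))\<bar>
      \<le> (\<gamma> + sqrt (\<gamma>\<^sup>2 - 1) / 4) / (\<gamma>\<^sup>2 - 1)"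
    by (simp add: add.commute)
qed

end
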